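(* Fix a constant $\lambda\ge0$ and $R>0$, and suppose $\Gamma\cap\mathcal O$ is the straight segment $\{(x,0):-R<x<R\}$, where $\mathcal O$ is the open disc of radius $R$ centered at the origin, with $\boldsymbol n=(0,1)^T$ or $\boldsymbol n=(0,-1)^T$ its unit normal. Let the collocation points be $\boldsymbol q^{(1)}_k=(\eta^{(1)}_kR,0)$, $k=1,2,3$, with $\eta^{(1)}_k$ distinct; $\boldsymbol q^{(2)}_k=(\eta^{(2)}_kR,0)$, $k=1,2$, with $\eta^{(2)}_1\ne\eta^{(2)}_2$; $\boldsymbol q^{(3)}=(\eta^{(3)}R,0)$; and $\boldsymbol q^{(4)}_k=R\boldsymbol\xi_k$, $k=1,2,3$, where $\boldsymbol\xi_1,\boldsymbol\xi_2,\boldsymbol\xi_3$ are non-collinear points; all constants $\eta^{(d)}_k,\boldsymbol\xi_k$ are independent of $R$ and all points lie in $\mathcal O$. Then the $15\times15$ collocation matrix $\boldsymbol M$ defined in the context is independent of $R$ and invertible.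
   Context: Let $\phi_1=1,\phi_2=x,\phi_3=y,\phi_4=x^2,\phi_5=y^2,\phi_6=xy$. Unknowns are $\boldsymbol c_1,\dots,\boldsymbol c_6\in\mathbb R^2$ (components $c_j^{(1)},c_j^{(2)}$) and $d_1,d_2,d_3\in\mathbb R$, i.e. a vector in $\mathbb R^{15}$, representing $\hat{\boldsymbol v}(\boldsymbol x)=\sum_{j=1}^6\boldsymbol c_j\phi_j(\boldsymbol x/R)$, $\hat q(\boldsymbol x)=\sum_{j=1}^3\frac{d_j}{R}\phi_j(\boldsymbol x/R)$. The matrix $\boldsymbol M$ is the matrix of the linear map sending the unknowns to the 15 quantities: (i) for $k=1,2,3$: $\sum_{j=1}^6\phi_j(\boldsymbol q^{(1)}_k/R)\boldsymbol c_j\in\mathbb R^2$; (ii) for $k=1,2$: $\sum_{j=1}^6\big(\boldsymbol c_j\nabla\phi_j^T+\nabla\phi_j\boldsymbol c_j^T\big)(\boldsymbol q^{(2)}_k/R)\,\boldsymbol n(\boldsymbol q^{(2)}_k)-\sum_{j=1}^3d_j\phi_j(\boldsymbol q^{(2)}_k/R)\boldsymbol n(\boldsymbol q^{(2)}_k)\in\mathbb R^2$; (iii) $\sum_{j=1}^6\big((\Delta-\lambda)\phi_j\big)(\boldsymbol q^{(3)}/R)\,\boldsymbol c_j-\sum_{j=1}^3\nabla\phi_j(\boldsymbol q^{(3)}/R)\,d_j\in\mathbb R^2$; (iv) for $k=1,2,3$: $\sum_{j=1}^6\big(\partial_x\phi_j\,c_j^{(1)}+\partial_y\phi_j\,c_j^{(2)}\big)(\boldsymbol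 q^{(4)}_k/R)\in\mathbb R$ (with any fixed ordering of rows and columns). These encode collocation of the Dirichlet condition, the traction (Neumann) condition, the Brinkman momentum equation $\Delta\hat{\boldsymbol v}-\lambda\hat{\boldsymbol v}-\nabla\hat q$, and the divergence-free condition, after scaling by powers of $R$. *)

theory Defs
  imports "HOL-Analysis.Analysis"
begin

definition phi :: "nat \<Rightarrow> real^2 \<Rightarrow> real" where
  "phi j p = (let x = p$1; y = p$2 in
     (if j = 1 then 1 else if j = 2 then x else if j = 3 then y
      else if j = 4 then x^2 else if j = 5 then y^2 else if j = 6 then x*y else 0))"

definition dphix :: "nat \<Rightarrow> real^2 \<Rightarrow> real" where
  "dphix j p = (let x = p$1; y = p$2 in
     (if j = 2 then 1 else if j = 4 then 2*x else if j = 6 then y else 0))"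

definition dphiy :: "nat \<Rightarrow> real^2 \<Rightarrow> real" where
  "dphiy j p = (let x = p$1; y = p$2 in
     (if j = 3 then 1 else if j = 5 then 2*y else if j = 6 then x else 0))"

definition dphi :: "nat \<Rightarrow> nat \<Rightarrow> real^2 \<Rightarrow> real" where
  "dphi i j p = (if i = 1 then dphix j p else dphiy j p)"

definition lapphi :: "nat \<Rightarrow> real^2 \<Rightarrow> real" where
  "lapphi j p = (if j = 4 \<or> j = 5 then 2 else 0)"

definition idx :: "nat \<Rightarrow> 15" where "idx k = of_nat k"

text \<open>Unknown ordering: c_j^(i) is coordinate 2(j-1)+(i-1) (j=1..6, i=1..2),
  d_j is coordinate 12+(j-1) (j=1..3).\<close>
definition cc :: "real^15 \<Rightarrow> nat \<Rightarrow> nat \<Rightarrow> real" where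
  "cc u j i = u $ idx (2*(j-1) + (i-1))"

definition dd :: "real^15 \<Rightarrow> nat \<Rightarrow> real" where
  "dd u j = u $ idx (12 + (j-1))"

definition comp :: "real^2 \<Rightarrow> nat \<Rightarrow> real" where
  "comp v i = (if i = 1 then v$1 else v$2)"

definition collocmap ::
  "real \<Rightarrow> real \<Rightarrow> (real^2 \<Rightarrow> real^2) \<Rightarrow> (nat \<Rightarrow> real^2) \<Rightarrow> (nat \<Rightarrow> real^2)
   \<Rightarrow> real^2 \<Rightarrow> (nat \<Rightarrow> real^2) \<Rightarrow> real^15 \<Rightarrow> real^15" where
  "collocmap R lam n q1 q2 q3 q4 u = (\<chi> r.
     let s = (\<lambda>p. (1/R) *\<^sub>R p) in
     (if \<exists>k\<in>{1..3}. \<exists>i\<in>{1..2}. r = idx (2*(k-1)+(i-1)) then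
        (let (k,i) = (SOME (k,i). k\<in>{1..3} \<and> i\<in>{1..2} \<and> r = idx (2*(k-1)+(i-1))) in
          \<Sum>j=1..6. phi j (s (q1 k)) * cc u j i)
      else if \<exists>k\<in>{1..2}. \<exists>i\<in>{1..2}. r = idx (6 + 2*(k-1)+(i-1)) then
        (let (k,i) = (SOME (k,i). k\<in>{1..2} \<and> i\<in>{1..2} \<and> r = idx (6 + 2*(k-1)+(i-1))) in
          (\<Sum>j=1..6. \<Sum>l=1..2.
              (cc u j i * dphi l j (s (q2 k)) + dphi i j (s (q2 k)) * cc u j l)
                * comp (n (q2 k)) l)
          - (\<Sum>j=1..3. dd u j * phi j (s (q2 k)) * comp (n (q2 k)) i))
      else if \<exists>i\<in>{1..2}. r = idx (10 + (i-1)) then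
        (let i = (SOME i. i\<in>{1..2} \<and> r = idx (10 + (i-1))) in
          (\<Sum>j=1..6. (lapphi j (s q3) - lam * phi j (s q3)) * cc u j i)
          - (\<Sum>j=1..3. dphi i j (s q3) * dd u j))
      else
        (let k = (SOME k. k\<in>{1..3} \<and> r = idx (12 + (k-1))) in
          \<Sum>j=1..6. dphix j (s (q4 k)) * cc u j 1 + dphiy j (s (q4 k)) * cc u j 2)))"

definition collocM ::
  "real \<Rightarrow> real \<Rightarrow> (real^2 \<Rightarrow> real^2) \<Rightarrow> (nat \<Rightarrow> real^2) \<Rightarrow> (nat \<Rightarrow> real^2)
   \<Rightarrow> real^2 \<Rightarrow> (nat \<Rightarrow> real^2) \<Rightarrow> real^15^15" where
  "collocM R lam n q1 q2 q3 q4 = matrix (collocmap R lam n q1 q2 q3 q4)"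

end

theory Submission
  imports Defs
begin

(*
  Every row of the collocation map only evaluates the monomials at q/R, so dividing all
  collocation points by R turns the system for radius R into the one for radius 1; this is
  the independence of R.  Invertibility is the triviality of the kernel of the unit-radius
  system, which is solved by elimination.  The Dirichlet rows say that the quadratic
  c_1 + x c_2 + x^2 c_4 has three distinct roots on the segment.  The divergence rows then say
  that an affine function vanishes at three non-collinear points, so c_3^(2) = c_6^(2) = 0 and
  c_6^(1) = -2 c_5^(2).  Along the segment the two traction rows are affine in x, which gives
  c_3^(1) = c_6^(1) = 0 and d_1 = d_2 = 0, and the momentum rows finally give c_5^(1) = d_3 = 0.
*)

lemma linear_eq_0_if_two_roots:
  fixes a b s t :: "'a::idom"
  assumes "s \<noteq> t" "a + s * b = 0" "a + t * b = 0"
  shows "a = 0 \<and> b = 0"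
proof -
  have "(s - t) * b = (a + s * b) - (a + t * b)"
    by (simp add: algebra_simps)
  then have "b = 0"
    using assms by simp
  then show ?thesis
    using assms(2) by simp
qed

lemma quadratic_eq_0_if_three_roots:
  fixes a b c s t v :: "'a::idom"
  assumes "s \<noteq> t" "s \<noteq> v" "t \<noteq> v"
    and "a + s * b + s\<^sup>2 * c = 0" "a + t * b + t\<^sup>2 * c = 0" "a + v * b + v\<^sup>2 * c = 0"
  shows "a = 0 \<and> b = 0 \<and> c = 0"
proof -
  have "(s - t) * (b + (s + t) * c) = (a + s * b + s\<^sup>2 * c) - (a + t * b + t\<^sup>2 * c)"
    and "(s - v) * (b + (s + v) * c) = (a + s * b + s\<^sup>2 * c) - (a + v * b + v\<^sup>2 * c)"
    by (simp_all add: algebra_simps power2_eq_square)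
  then have st: "b + (s + t) * c = 0" and sv: "b + (s + v) * c = 0"
    using assms(1,2,4-6) by simp_all
  have "(t - v) * c = (b + (s + t) * c) - (b + (s + v) * c)"
    by (simp add: algebra_simps)
  then have "c = 0"
    using st sv assms(3) by simp
  then show ?thesis
    using st assms(4) by simp
qed

lemma normal_eq_0_if_not_collinear_in_hyperplane:
  fixes w :: "'a::euclidean_space"
  assumes "DIM('a) = 2" "\<not> collinear S" "S \<subseteq> {x. w \<bullet> x = r}"
  shows "w = 0"
proof (rule ccontr)
  assume "w \<noteq> 0"
  then have "aff_dim S \<le> 1"
    using aff_dim_subset[OF assms(3)] aff_dim_hyperplane assms(1) by fastforce
  then show False
    using assms(2) collinear_aff_dim by blast
qed

lemma affine_eq_0_if_not_collinear_zeros: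
  fixes a b c :: real and p :: "nat \<Rightarrow> real^2"
  assumes "\<not> collinear {p 1, p 2, p 3}"
    and "\<And>k. k \<in> {1..3} \<Longrightarrow> a + b * p k $ 1 + c * p k $ 2 = 0"
  shows "a = 0 \<and> b = 0 \<and> c = 0"
proof -
  have "vector [b, c] \<bullet> p k = - a" if "k \<in> {1..3}" for k
    using assms(2)[OF that] by (simp add: inner_vec_def sum_2 algebra_simps)
  then have "{p 1, p 2, p 3} \<subseteq> {x. vector [b, c] \<bullet> x = - a}"
    by auto
  then have "vector [b, c] = (0 :: real^2)"
    using normal_eq_0_if_not_collinear_in_hyperplane assms(1) by force
  then have "b = 0" "c = 0"
    by (simp_all add: vec_eq_iff forall_2)
  then show ?thesis
    using assms(2)[of 1] by simp
qed

lemma invertible_matrix_if_ker_trivial: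
  fixes f :: "real^'n \<Rightarrow> real^'n"
  assumes "linear f" and "\<And>x. f x = 0 \<Longrightarrow> x = 0"
  shows "invertible (matrix f)"
  using assms by (simp add: invertible_left_inverse matrix_left_invertible_ker matrix_works)

lemma mixed_radix_index_inj:
  fixes k k' i i' :: nat
  assumes "i \<in> {1..2}" "i' \<in> {1..2}" "2*(k-1)+(i-1) = 2*(k'-1)+(i'-1)"
  shows "k - 1 = k' - 1 \<and> i = i'"
proof -
  have "(2*(k-1)+(i-1)) div 2 = (2*(k'-1)+(i'-1)) div 2"
    and "(2*(k-1)+(i-1)) mod 2 = (2*(k'-1)+(i'-1)) mod 2"
    using assms(3) by simp_all
  then show ?thesis
    using assms(1,2) by auto
qed

lemma idx_eq_iff:
  assumes "a < 15" "b < 15"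
  shows "idx a = idx b \<longleftrightarrow> a = b"
proof
  assume "idx a = idx b"
  then have "Rep_bit1 (idx a) = Rep_bit1 (idx b)"
    by simp
  then show "a = b"
    using assms by (simp add: idx_def bit1.of_nat_eq bit1.Abs_inverse)
qed simp

lemma ex_idx: "\<exists>m<15. r = idx m"
proof (induct r rule: bit1_induct)
  case (of_int z)
  then show ?case
    by (intro exI[of _ "nat z"]) (auto simp: idx_def)
qed

lemma some_pair_index_eq:
  assumes "k \<in> {1..K}" "i \<in> {1..2}" "m + 2 * K \<le> 15"
  shows "(SOME (k',i'). k' \<in> {1..K} \<and> i' \<in> {1..2} \<and>
            idx (m + 2*(k-1)+(i-1)) = idx (m + 2*(k'-1)+(i'-1))) = (k,i)"
proof (rule some_equality)
  fix p
  assume "case p of (k',i') \<Rightarrow> k' \<in> {1..K} \<and> i' \<in> {1..2} \<and>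
            idx (m + 2*(k-1)+(i-1)) = idx (m + 2*(k'-1)+(i'-1))"
  then obtain k' i' where p: "p = (k',i')" and k': "k' \<in> {1..K}" "i' \<in> {1..2}"
    and "idx (m + 2*(k-1)+(i-1)) = idx (m + 2*(k'-1)+(i'-1))"
    by (cases p) auto
  then have "2*(k-1)+(i-1) = 2*(k'-1)+(i'-1)"
    using assms by (subst (asm) idx_eq_iff) auto
  then have "k - 1 = k' - 1 \<and> i = i'"
    by (rule mixed_radix_index_inj[OF assms(2) k'(2)])
  then show "p = (k,i)"
    using assms(1) k'(1) p by auto
qed (use assms in auto)

lemma vec15_eq_0_if_cc_dd_eq_0:
  assumes "\<And>j i. j \<in> {1..6} \<Longrightarrow> i \<in> {1..2} \<Longrightarrow> cc u j i = 0"
    and "\<And>j. j \<in> {1..3} \<Longrightarrow> dd u j = 0"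
  shows "u = 0"
proof -
  have "u $ idx m = 0" if "m < 15" for m
  proof (cases "m < 12")
    case True
    then have "cc u (m div 2 + 1) (m mod 2 + 1) = 0"
      using assms(1) by auto
    then show ?thesis
      unfolding cc_def by simp
  next
    case False
    then have "m - 11 \<in> {1..3}"
      using that by auto
    then have "dd u (m - 11) = 0"
      by (rule assms(2))
    then show ?thesis
      using False unfolding dd_def by simp
  qed
  then show ?thesis
    using ex_idx by (metis vec_eq_iff zero_index)
qed

lemma sum_1_to_2: "sum f {1..2::nat} = f 1 + f 2"
  and sum_1_to_3: "sum f {1..3::nat} = f 1 + f 2 + f 3"
  and sum_1_to_6: "sum f {1..6::nat} = f 1 + f 2 + f 3 + f 4 + f 5 + f 6"
  by (simp_all add: eval_nat_numeral)

lemma collocmap_dirichlet_row: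
  assumes "k \<in> {1..3}" "i \<in> {1..2}"
  shows "collocmap R lam n q1 q2 q3 q4 u $ idx (2*(k-1)+(i-1))
     = (\<Sum>j=1..6. phi j ((1/R) *\<^sub>R q1 k) * cc u j i)"
proof -
  have row: "\<exists>k'\<in>{1..3}. \<exists>i'\<in>{1..2}. idx (2*(k-1)+(i-1)) = idx (2*(k'-1)+(i'-1))"
    using assms by blast
  have "(SOME (k',i'). k'\<in>{1..3} \<and> i'\<in>{1..2} \<and> idx (2*(k-1)+(i-1)) = idx (2*(k'-1)+(i'-1)))
      = (k,i)"
    using some_pair_index_eq[OF assms, of 0] by simp
  then show ?thesis
    unfolding collocmap_def vec_lambda_beta Let_def by (simp only: if_P[OF row] prod.case)
qed

lemma collocmap_traction_row:
  assumes "k \<in> {1..2}" "i \<in> {1..2}"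
  shows "collocmap R lam n q1 q2 q3 q4 u $ idx (6 + 2*(k-1)+(i-1))
     = (\<Sum>j=1..6. \<Sum>l=1..2.
          (cc u j i * dphi l j ((1/R) *\<^sub>R q2 k) + dphi i j ((1/R) *\<^sub>R q2 k) * cc u j l)
            * comp (n (q2 k)) l)
       - (\<Sum>j=1..3. dd u j * phi j ((1/R) *\<^sub>R q2 k) * comp (n (q2 k)) i)"
proof -
  have no_row1: "\<not> (\<exists>k'\<in>{1..3}. \<exists>i'\<in>{1..2}. idx (6 + 2*(k-1)+(i-1)) = idx (2*(k'-1)+(i'-1)))"
    using assms by (auto simp: idx_eq_iff)
  have row: "\<exists>k'\<in>{1..2}. \<exists>i'\<in>{1..2}. idx (6 + 2*(k-1)+(i-1)) = idx (6 + 2*(k'-1)+(i'-1))"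
    using assms by blast
  have "(SOME (k',i'). k'\<in>{1..2} \<and> i'\<in>{1..2} \<and> idx (6 + 2*(k-1)+(i-1)) = idx (6 + 2*(k'-1)+(i'-1)))
      = (k,i)"
    using some_pair_index_eq[OF assms, of 6] by simp
  then show ?thesis
    unfolding collocmap_def vec_lambda_beta Let_def
    by (simp only: if_not_P[OF no_row1] if_P[OF row] prod.case)
qed

lemma collocmap_momentum_row:
  assumes "i \<in> {1..2}"
  shows "collocmap R lam n q1 q2 q3 q4 u $ idx (10 + (i-1))
     = (\<Sum>j=1..6. (lapphi j ((1/R) *\<^sub>R q3) - lam * phi j ((1/R) *\<^sub>R q3)) * cc u j i)
       - (\<Sum>j=1..3. dphi i j ((1/R) *\<^sub>R q3) * dd u j)"
proof -
  have no_row1: "\<not> (\<exists>k'\<in>{1..3}. \<exists>i'\<in>{1..2}. idx (10 + (i-1)) = idx (2*(k'-1)+(i'-1)))"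
    and no_row2: "\<not> (\<exists>k'\<in>{1..2}. \<exists>i'\<in>{1..2}. idx (10 + (i-1)) = idx (6 + 2*(k'-1)+(i'-1)))"
    using assms by (auto simp: idx_eq_iff)
  have row: "\<exists>i'\<in>{1..2}. idx (10 + (i-1)) = idx (10 + (i'-1))"
    using assms by blast
  have "(SOME i'. i'\<in>{1..2} \<and> idx (10 + (i-1)) = idx (10 + (i'-1))) = i"
    using assms by (intro some_equality) (auto simp: idx_eq_iff)
  then show ?thesis
    unfolding collocmap_def vec_lambda_beta Let_def
    by (simp only: if_not_P[OF no_row1] if_not_P[OF no_row2] if_P[OF row])
qed

lemma collocmap_divergence_row:
  assumes "k \<in> {1..3}"
  shows "collocmap R lam n q1 q2 q3 q4 u $ idx (12 + (k-1))
     = (\<Sum>j=1..6. dphix j ((1/R) *\<^sub>R q4 k) * cc u j 1 + dphiy j ((1/R) *\<^sub>R q4 k) * cc u j 2)"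
proof -
  have no_row1: "\<not> (\<exists>k'\<in>{1..3}. \<exists>i'\<in>{1..2}. idx (12 + (k-1)) = idx (2*(k'-1)+(i'-1)))"
    and no_row2: "\<not> (\<exists>k'\<in>{1..2}. \<exists>i'\<in>{1..2}. idx (12 + (k-1)) = idx (6 + 2*(k'-1)+(i'-1)))"
    and no_row3: "\<not> (\<exists>i'\<in>{1..2}. idx (12 + (k-1)) = idx (10 + (i'-1)))"
    using assms by (auto simp: idx_eq_iff)
  have "(SOME k'. k'\<in>{1..3} \<and> idx (12 + (k-1)) = idx (12 + (k'-1))) = k"
    using assms by (intro some_equality) (auto simp: idx_eq_iff)
  then show ?thesis
    unfolding collocmap_def vec_lambda_beta Let_def
    by (simp only: if_not_P[OF no_row1] if_not_P[OF no_row2] if_not_P[OF no_row3])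
qed

lemma collocmap_linear: "linear (collocmap R lam n q1 q2 q3 q4)"
  by (rule linearI)
    (simp_all add: collocmap_def vec_eq_iff Let_def cc_def dd_def split_beta
       sum.distrib[symmetric] sum_distrib_left algebra_simps)

lemma collocmap_rescale:
  assumes "R \<noteq> 0"
  shows "collocmap R lam n q1 q2 q3 q4 =
    collocmap 1 lam (\<lambda>p. n (R *\<^sub>R p)) (\<lambda>k. (1/R) *\<^sub>R q1 k) (\<lambda>k. (1/R) *\<^sub>R q2 k)
      ((1/R) *\<^sub>R q3) (\<lambda>k. (1/R) *\<^sub>R q4 k)"
proof -
  have cancel: "R *\<^sub>R (1/R) *\<^sub>R p = p" for p :: "real^2"
    using assms by simp
  show ?thesis
    by (rule ext) (simp only: collocmap_def Let_def div_by_1 scaleR_one cancel)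
qed

lemma collocation_system_solution_eq_0:
  fixes c :: "nat \<Rightarrow> nat \<Rightarrow> real" and d s t :: "nat \<Rightarrow> real" and xi :: "nat \<Rightarrow> real^2"
  assumes "inj_on s {1..3}" "t 1 \<noteq> t 2" "\<not> collinear {xi 1, xi 2, xi 3}"
    and dirichlet: "\<And>k i. k \<in> {1..3} \<Longrightarrow> i \<in> {1..2} \<Longrightarrow>
      c 1 i + s k * c 2 i + (s k)\<^sup>2 * c 4 i = 0"
    and traction1: "\<And>k. k \<in> {1..2} \<Longrightarrow>
      c 3 1 + t k * c 6 1 + c 2 2 + 2 * t k * c 4 2 = 0"
    and traction2: "\<And>k. k \<in> {1..2} \<Longrightarrow>
      2 * c 3 2 + 2 * t k * c 6 2 - d 1 - t k * d 2 = 0"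
    and momentum1: "2 * c 4 1 + 2 * c 5 1 - lam * (c 1 1 + v * c 2 1 + v\<^sup>2 * c 4 1) - d 2 = 0"
    and momentum2: "2 * c 4 2 + 2 * c 5 2 - lam * (c 1 2 + v * c 2 2 + v\<^sup>2 * c 4 2) - d 3 = 0"
    and divergence: "\<And>k. k \<in> {1..3} \<Longrightarrow>
      c 2 1 + 2 * xi k $ 1 * c 4 1 + xi k $ 2 * c 6 1 + c 3 2 + 2 * xi k $ 2 * c 5 2 + xi k $ 1 * c 6 2 = 0"
  shows "(\<forall>j\<in>{1..6}. \<forall>i\<in>{1..2}. c j i = 0) \<and> (\<forall>j\<in>{1..3}. d j = 0)"
proof -
  have s_distinct: "s 1 \<noteq> s 2" "s 1 \<noteq> s 3" "s 2 \<noteq> s 3"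
    using inj_onD[OF assms(1)] by fastforce+
  have c124: "c 1 i = 0 \<and> c 2 i = 0 \<and> c 4 i = 0" if "i \<in> {1..2}" for i
    using quadratic_eq_0_if_three_roots[OF s_distinct dirichlet[OF _ that] dirichlet[OF _ that]
        dirichlet[OF _ that]]
    by simp
  have "c 3 2 + c 6 2 * xi k $ 1 + (c 6 1 + 2 * c 5 2) * xi k $ 2 = 0" if "k \<in> {1..3}" for k
    using divergence[OF that] c124[of 1] by (simp add: algebra_simps)
  then have c32_c62: "c 3 2 = 0 \<and> c 6 2 = 0 \<and> c 6 1 + 2 * c 5 2 = 0"
    by (rule affine_eq_0_if_not_collinear_zeros[OF assms(3)])
  have "c 3 1 + t k * c 6 1 = 0" if "k \<in> {1..2}" for k
    using traction1[OF that] c124[of 2] by simp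
  from linear_eq_0_if_two_roots[OF assms(2) this this]
  have c31_c61: "c 3 1 = 0 \<and> c 6 1 = 0"
    by simp
  have "- d 1 + t k * (- d 2) = 0" if "k \<in> {1..2}" for k
    using traction2[OF that] c32_c62 by simp
  from linear_eq_0_if_two_roots[OF assms(2) this this]
  have d1_d2: "d 1 = 0 \<and> d 2 = 0"
    by simp
  have c52: "c 5 2 = 0"
    using c32_c62 c31_c61 by simp
  have c51: "c 5 1 = 0"
    using momentum1 c124[of 1] d1_d2 by simp
  have d3: "d 3 = 0"
    using momentum2 c124[of 2] c52 by simp
  have "{1..6::nat} = {1,2,3,4,5,6}" "{1..3::nat} = {1,2,3}" "{1..2::nat} = {1,2}"
    by auto
  then show ?thesis
    using c124 c31_c61 c32_c62 c51 c52 d1_d2 d3 by auto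
qed

lemma collocmap_unit_kernel_trivial:
  assumes nv: "nv $ 1 = 0" "nv $ 2 \<noteq> 0"
    and "inj_on eta1 {1..3}" "eta2 1 \<noteq> eta2 2" "\<not> collinear {xi 1, xi 2, xi 3}"
    and "collocmap 1 lam (\<lambda>_. nv) (\<lambda>k. vector [eta1 k, 0]) (\<lambda>k. vector [eta2 k, 0])
           (vector [eta3, 0]) xi u = 0"
  shows "u = 0"
proof -
  let ?f = "collocmap 1 lam (\<lambda>_. nv) (\<lambda>k. vector [eta1 k, 0]) (\<lambda>k. vector [eta2 k, 0])
              (vector [eta3, 0]) xi"
  have row: "?f u $ r = 0" for r
    using assms(6) by simp
  have i12: "(1::nat) \<in> {1..2}" "(2::nat) \<in> {1..2}"
    by simp_all
  note sums = sum_1_to_2 sum_1_to_3 sum_1_to_6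
  note basis = phi_def dphix_def dphiy_def dphi_def lapphi_def comp_def Let_def
  have dirichlet: "cc u 1 i + eta1 k * cc u 2 i + (eta1 k)\<^sup>2 * cc u 4 i = 0"
    if "k \<in> {1..3}" "i \<in> {1..2}" for k i
    using row[of "idx (2*(k-1)+(i-1))"] unfolding collocmap_dirichlet_row[OF that] sums
    by (simp add: basis)
  have traction1: "cc u 3 1 + eta2 k * cc u 6 1 + cc u 2 2 + 2 * eta2 k * cc u 4 2 = 0"
    if "k \<in> {1..2}" for k
  proof -
    have "nv $ 2 * (cc u 3 1 + eta2 k * cc u 6 1 + cc u 2 2 + 2 * eta2 k * cc u 4 2) = 0"
      using row[of "idx (6 + 2*(k-1)+(1-1))"] unfolding collocmap_traction_row[OF that i12(1)] sums
      by (simp add: basis nv algebra_simps)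
    then show ?thesis
      using nv(2) by simp
  qed
  have traction2: "2 * cc u 3 2 + 2 * eta2 k * cc u 6 2 - dd u 1 - eta2 k * dd u 2 = 0"
    if "k \<in> {1..2}" for k
  proof -
    have "nv $ 2 * (2 * cc u 3 2 + 2 * eta2 k * cc u 6 2 - dd u 1 - eta2 k * dd u 2) = 0"
      using row[of "idx (6 + 2*(k-1)+(2-1))"] unfolding collocmap_traction_row[OF that i12(2)] sums
      by (simp add: basis nv algebra_simps)
    then show ?thesis
      using nv(2) by simp
  qed
  have momentum1: "2 * cc u 4 1 + 2 * cc u 5 1
      - lam * (cc u 1 1 + eta3 * cc u 2 1 + eta3\<^sup>2 * cc u 4 1) - dd u 2 = 0"
    using row[of "idx (10 + (1-1))"] unfolding collocmap_momentum_row[OF i12(1)] sums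
    by (simp add: basis algebra_simps)
  have momentum2: "2 * cc u 4 2 + 2 * cc u 5 2
      - lam * (cc u 1 2 + eta3 * cc u 2 2 + eta3\<^sup>2 * cc u 4 2) - dd u 3 = 0"
    using row[of "idx (10 + (2-1))"] unfolding collocmap_momentum_row[OF i12(2)] sums
    by (simp add: basis algebra_simps)
  have divergence: "cc u 2 1 + 2 * xi k $ 1 * cc u 4 1 + xi k $ 2 * cc u 6 1
      + cc u 3 2 + 2 * xi k $ 2 * cc u 5 2 + xi k $ 1 * cc u 6 2 = 0"
    if "k \<in> {1..3}" for k
    using row[of "idx (12 + (k-1))"] unfolding collocmap_divergence_row[OF that] sums
    by (simp add: basis algebra_simps)
  have "(\<forall>j\<in>{1..6}. \<forall>i\<in>{1..2}. cc u j i = 0) \<and> (\<forall>j\<in>{1..3}. dd u j = 0)"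
    by (rule collocation_system_solution_eq_0[OF assms(3-5) dirichlet traction1 traction2
          momentum1 momentum2 divergence])
  then show ?thesis
    by (intro vec15_eq_0_if_cc_dd_eq_0) auto
qed

theorem mainTheorem3:
  fixes lam R :: real and nv :: "real^2"
    and eta1 eta2 :: "nat \<Rightarrow> real" and eta3 :: real and xi :: "nat \<Rightarrow> real^2"
  assumes "lam \<ge> 0" and "R > 0"
    and "nv = vector [0, 1] \<or> nv = vector [0, -1]"
    and "inj_on eta1 {1..3}"
    and "eta2 1 \<noteq> eta2 2"
    and "\<not> collinear {xi 1, xi 2, xi 3}"
    and "\<forall>k\<in>{1..3}. vector [eta1 k * R, 0] \<in> ball (0::real^2) R"
    and "\<forall>k\<in>{1..2}. vector [eta2 k * R, 0] \<in> ball (0::real^2) R"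
    and "vector [eta3 * R, 0] \<in> ball (0::real^2) R"
    and "\<forall>k\<in>{1..3}. R *\<^sub>R xi k \<in> ball (0::real^2) R"
  shows "(\<forall>R'>0. collocM R' lam (\<lambda>_. nv) (\<lambda>k. vector [eta1 k * R', 0])
             (\<lambda>k. vector [eta2 k * R', 0]) (vector [eta3 * R', 0]) (\<lambda>k. R' *\<^sub>R xi k)
          = collocM R lam (\<lambda>_. nv) (\<lambda>k. vector [eta1 k * R, 0])
             (\<lambda>k. vector [eta2 k * R, 0]) (vector [eta3 * R, 0]) (\<lambda>k. R *\<^sub>R xi k))
       \<and> invertible (collocM R lam (\<lambda>_. nv) (\<lambda>k. vector [eta1 k * R, 0])
             (\<lambda>k. vector [eta2 k * R, 0]) (vector [eta3 * R, 0]) (\<lambda>k. R *\<^sub>R xi k))"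
proof -
  have nv: "nv $ 1 = 0" "nv $ 2 \<noteq> 0"
    using assms(3) by auto
  let ?unit = "collocmap 1 lam (\<lambda>_. nv) (\<lambda>k. vector [eta1 k, 0]) (\<lambda>k. vector [eta2 k, 0])
                 (vector [eta3, 0]) xi"
  have unit: "collocmap R' lam (\<lambda>_. nv) (\<lambda>k. vector [eta1 k * R', 0])
      (\<lambda>k. vector [eta2 k * R', 0]) (vector [eta3 * R', 0]) (\<lambda>k. R' *\<^sub>R xi k) = ?unit"
    if "R' > 0" for R'
  proof -
    have "(1/R') *\<^sub>R vector [a * R', 0] = (vector [a, 0] :: real^2)" for a
      using that by (simp add: vec_eq_iff forall_2)
    then show ?thesis
      using that by (subst collocmap_rescale) simp_all
  qed
  have "invertible (matrix ?unit)"
    using collocmap_linear collocmap_unit_kernel_trivial[OF nv assms(4-6)]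
    by (rule invertible_matrix_if_ker_trivial)
  then show ?thesis
    using unit assms(2) unfolding collocM_def by simp
qed

end
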